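(* For every planar forest $F$, $\Delta(F)=\sum_{I}I\otimes(F-I)$, where the sum runs over all biideals $I$ of $F$ (including $I=\emptyset$ and $I$ equal to the whole vertex set).
   Context: Planar rooted trees have their children linearly ordered left to right; a planar forest is a finite, possibly empty, sequence of planar rooted trees ($1$ = empty forest); $\mathcal{H}$ is the free associative unital algebra over a field $K$ on planar rooted trees, with basis the planar forests and product concatenation. $B^+(F)$ is the tree obtained by grafting the trees of $F$ (in order) on a new common root; $\varepsilon(F)=\delta_{F,1}$. $\Delta:\mathcal{H}\to\mathcal{H}\otimes\mathcal{H}$ is the unique linear map with $\Delta(1)=1\otimes1$, $\Delta(xy)=(x\otimes1)\Delta(y)+\Delta(x)(1\otimes y)-x\otimes y$ and $\Delta(B^+(x))=B^+(x)\otimes 1+(\mathrm{Id}\otimes B^+)\Delta(x)$. Orders on vertices of a nonempty forest $F=t_1\cdots t_n$: $s\geq_{high}s'$ iff $s'=s$ or $s'$ is an ancestor of $s$. If $s,s'$ are incomparable for $\geq_{high}$, $s\geq_{left}s'$ iff either $s\in t_i$, $s'\in t_j$ with $i<j$, or $s,s'\in t_i$ and $s\geq_{left}s'$ in the forest obtained from $t_i$ by deleting its root (recursively). A set $I$ of vertices of $F$ is a biideal if for all vertices $s,s'$: ($s\in I$ and $s'\geq_{high}s$) implies $s'\in I$, and ($s\in I$ and $s'\geq_{left}s$) implies $s'\in I$. For such $I$, $I$ also denotes the planar forest formed by the vertices of $I$ with induced edges and left-right order, and $F-I$ the planar forest formed by the remaining vertices. *)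

theory Defs
  imports Main "HOL-Library.Function_Algebras"
begin

text \<open>A planar rooted tree is a root with an ordered list of subtrees;
  a planar forest is a list of planar rooted trees (the empty list is the
  empty forest 1). B+ grafts a forest on a new root.\<close>

datatype ptree = Node "ptree list"

type_synonym forest = "ptree list"

fun children :: "ptree \<Rightarrow> forest" where
  "children (Node ts) = ts"

definition Bplus :: "forest \<Rightarrow> ptree" where
  "Bplus F = Node F"

text \<open>A vertex of a forest F = t_0 ... t_(n-1) is addressed by a nonempty list
  i # p: the root of t_i is [i], and i # p with p nonempty is the vertex with
  address p in the forest obtained from t_i by deleting its root.\<close>

fun is_vertex :: "forest \<Rightarrow> nat list \<Rightarrow> bool" where
  "is_vertex F [] = False"
| "is_vertex F (i # p) = (i < length F \<and> (p = [] \<or> is_vertex (children (F ! i)) p))"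

definition vertices :: "forest \<Rightarrow> nat list set" where
  "vertices F = {p. is_vertex F p}"

text \<open>s \<ge>_high s' iff s' = s or s' is an ancestor of s, i.e. the address of s'
  is a prefix of the address of s.\<close>

definition high_ge :: "nat list \<Rightarrow> nat list \<Rightarrow> bool" where
  "high_ge s s' \<longleftrightarrow> (\<exists>u. s = s' @ u)"

fun lft :: "nat list \<Rightarrow> nat list \<Rightarrow> bool" where
  "lft (i # p) (j # q) = (i < j \<or> (i = j \<and> lft p q))"
| "lft _ _ = False"

definition left_ge :: "nat list \<Rightarrow> nat list \<Rightarrow> bool" where
  "left_ge s s' \<longleftrightarrow> \<not> high_ge s s' \<and> \<not> high_ge s' s \<and> lft s s'"

definition biideal :: "forest \<Rightarrow> nat list set \<Rightarrow> bool" where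
  "biideal F I \<longleftrightarrow> I \<subseteq> vertices F \<and>
     (\<forall>s\<in>I. \<forall>s'\<in>vertices F. high_ge s' s \<longrightarrow> s' \<in> I) \<and>
     (\<forall>s\<in>I. \<forall>s'\<in>vertices F. left_ge s' s \<longrightarrow> s' \<in> I)"

text \<open>restr F S is the planar forest formed by the vertices of F lying in S,
  with induced edges and left-right order; when a vertex is not in S, its
  children's restricted forests are placed (in order) at its level. This is
  the induced planar forest for sets S closed under descendants (biideals)
  or under ancestors (complements of biideals), the only cases used.\<close>

fun restr_aux :: "nat \<Rightarrow> forest \<Rightarrow> nat list set \<Rightarrow> forest"
and restr_t :: "ptree \<Rightarrow> nat list set \<Rightarrow> forest" where
  "restr_aux k [] S = []"
| "restr_aux k (t # ts) S = restr_t t {p. k # p \<in> S} @ restr_aux (Suc k) ts S"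
| "restr_t (Node ts) S =
     (if [] \<in> S then [Node (restr_aux 0 ts S)] else restr_aux 0 ts S)"

definition restr :: "forest \<Rightarrow> nat list set \<Rightarrow> forest" where
  "restr F S = restr_aux 0 F S"

text \<open>An element of H \<otimes> H is given by its coefficients on the basis
  F \<otimes> G of pairs of planar forests.\<close>

type_synonym 'k tens = "forest \<times> forest \<Rightarrow> 'k"

definition tens :: "forest \<Rightarrow> forest \<Rightarrow> 'k::field tens" where
  "tens F G = (\<lambda>p. if p = (F, G) then 1 else 0)"

text \<open>(x \<otimes> 1) T for a forest x (left multiplication in the first factor).\<close>
definition mult_left :: "forest \<Rightarrow> 'k::field tens \<Rightarrow> 'k tens" where
  "mult_left x T = (\<lambda>(A, B). if take (length x) A = x then T (drop (length x) A, B) else 0)"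

text \<open>T (1 \<otimes> y) for a forest y (right multiplication in the second factor).\<close>
definition mult_right :: "forest \<Rightarrow> 'k::field tens \<Rightarrow> 'k tens" where
  "mult_right y T = (\<lambda>(A, B). if drop (length B - length y) B = y \<and> length y \<le> length B
      then T (A, take (length B - length y) B) else 0)"

definition id_Bplus :: "'k::field tens \<Rightarrow> 'k tens" where
  "id_Bplus T = (\<lambda>(A, B). case B of [Node ts] \<Rightarrow> T (A, ts) | _ \<Rightarrow> 0)"

text \<open>D is (the restriction to the basis of planar forests of) a linear map
  H \<rightarrow> H \<otimes> H satisfying the defining equations of \<Delta>. Since all maps
  involved are linear, it suffices to impose them on basis elements.\<close>

definition is_Delta :: "(forest \<Rightarrow> 'k::field tens) \<Rightarrow> bool" where
  "is_Delta D \<longleftrightarrow>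
     D [] = tens [] [] \<and>
     (\<forall>x y. D (x @ y) = mult_left x (D y) + mult_right y (D x) - tens x y) \<and>
     (\<forall>x. D [Bplus x] = tens [Bplus x] [] + id_Bplus (D x))"

end

theory Submission
  imports Defs
begin

text \<open>The coproduct is determined by its values on the empty forest, on single trees
  B+(F), and on products t G, so it suffices to check that the biideal sum obeys the same
  three rules. A biideal of B+(F) either contains the root, and then all vertices, or is a
  biideal of F lying under the root; this gives the grafting rule. In t G every vertex of t
  is left-greater than every vertex of G, so a biideal meeting G contains all of t: the
  biideals of t G are those of t and those of the form t \<union> J with J a biideal of G, and the
  two families share only t itself. Inclusion-exclusion over this union is exactly the rule
  \<Delta>(t G) = (t \<otimes> 1) \<Delta>(G) + \<Delta>(t) (1 \<otimes> G) - t \<otimes> G.\<close>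

lemma forest_induct [case_names Nil Node Cons]:
  assumes "P []"
    and "\<And>ts. P ts \<Longrightarrow> P [Node ts]"
    and "\<And>t G. G \<noteq> [] \<Longrightarrow> P [t] \<Longrightarrow> P G \<Longrightarrow> P (t # G)"
  shows "P F"
proof (induction F rule: measure_induct_rule[of "size_list size"])
  case (less F)
  show ?case
  proof (cases F)
    case Nil
    then show ?thesis using assms(1) by simp
  next
    case (Cons t G)
    obtain ts where t: "t = Node ts" by (cases t)
    show ?thesis
    proof (cases "G = []")
      case True
      then show ?thesis using less assms(2) Cons t by simp
    next
      case False
      then have "size_list size [t] < size_list size F" using Cons by (cases G) auto
      then show ?thesis using less assms(3) Cons False by simp
    qed
  qed
qed

lemma Cons_in_vertices_iff [simp]:
  "i # p \<in> vertices F \<longleftrightarrow> i < length F \<and> (p = [] \<or> p \<in> vertices (children (F ! i)))"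
  and Nil_notin_vertices [simp]: "[] \<notin> vertices F"
  by (simp_all add: vertices_def)

lemma vertices_Nil: "vertices [] = {}"
proof (intro set_eqI)
  fix p :: "nat list"
  show "p \<in> vertices [] \<longleftrightarrow> p \<in> {}" by (cases p) auto
qed

lemma vertices_Node: "vertices [Node ts] = insert [0] (Cons 0 ` vertices ts)"
proof (intro set_eqI)
  fix p :: "nat list"
  show "p \<in> vertices [Node ts] \<longleftrightarrow> p \<in> insert [0] (Cons 0 ` vertices ts)"
    by (cases p) auto
qed

definition shift_vertices :: "nat list set \<Rightarrow> nat list set" where
  "shift_vertices X = {Suc i # p | i p. i # p \<in> X}"

definition unshift_vertices :: "nat list set \<Rightarrow> nat list set" where
  "unshift_vertices X = {i # p | i p. Suc i # p \<in> X}"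

lemma Cons_in_shift_vertices [simp]:
  "a # p \<in> shift_vertices X \<longleftrightarrow> (\<exists>i. a = Suc i \<and> i # p \<in> X)"
  and Nil_notin_shift_vertices [simp]: "[] \<notin> shift_vertices X"
  by (auto simp: shift_vertices_def)

lemma Cons_in_unshift_vertices [simp]: "i # p \<in> unshift_vertices X \<longleftrightarrow> Suc i # p \<in> X"
  and Nil_notin_unshift_vertices [simp]: "[] \<notin> unshift_vertices X"
  by (auto simp: unshift_vertices_def)

lemma unshift_shift_vertices: "[] \<notin> X \<Longrightarrow> unshift_vertices (shift_vertices X) = X"
  by (auto simp: unshift_vertices_def) (metis neq_Nil_conv)

lemma unshift_vertices_Un: "unshift_vertices (A \<union> B) = unshift_vertices A \<union> unshift_vertices B"
  and unshift_vertices_Diff: "unshift_vertices (A - B) = unshift_vertices A - unshift_vertices B"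
  by (auto simp: unshift_vertices_def)

lemma shift_vertices_mono: "A \<subseteq> B \<Longrightarrow> shift_vertices A \<subseteq> shift_vertices B"
  by (auto simp: shift_vertices_def)

lemma finite_shift_vertices: "finite X \<Longrightarrow> finite (shift_vertices X)"
proof -
  assume "finite X"
  moreover have "shift_vertices X \<subseteq> (\<lambda>p. Suc (hd p) # tl p) ` X"
    by (force simp: shift_vertices_def)
  ultimately show ?thesis by (rule finite_surj)
qed

lemma vertices_Cons: "vertices (t # G) = vertices [t] \<union> shift_vertices (vertices G)"
proof (intro set_eqI)
  fix p :: "nat list"
  show "p \<in> vertices (t # G) \<longleftrightarrow> p \<in> vertices [t] \<union> shift_vertices (vertices G)"
    by (cases p; cases "hd p") auto
qed

lemma vertices_ConsE:
  assumes "x \<in> vertices (t # G)"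
  obtains "x \<in> vertices [t]" | i p where "x = Suc i # p" "i # p \<in> vertices G"
  using assms unfolding vertices_Cons[of t G] by (cases x) auto

lemma vertices_single_subset: "vertices [t] \<subseteq> vertices (t # G)"
  by (simp add: vertices_Cons[of t G])

lemma shift_vertices_Int_single: "shift_vertices J \<inter> vertices [t] = {}"
  by (auto simp: shift_vertices_def)

lemma unshift_vertices_single: "unshift_vertices (vertices [t]) = {}"
  by (auto simp: unshift_vertices_def)

lemma unshift_vertices_Cons: "unshift_vertices (vertices (t # G)) = vertices G"
  by (simp add: vertices_Cons[of t G] unshift_vertices_Un unshift_vertices_single unshift_shift_vertices)

lemma unshift_vertices_single_Un_shift:
  "[] \<notin> J \<Longrightarrow> unshift_vertices (vertices [t] \<union> shift_vertices J) = J"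
  by (simp add: unshift_vertices_Un unshift_vertices_single unshift_shift_vertices)

lemma finite_vertices: "finite (vertices F)"
proof (induction F rule: forest_induct)
  case (Cons t G)
  then show ?case by (subst vertices_Cons) (simp add: finite_shift_vertices)
qed (simp_all add: vertices_Nil vertices_Node)

section \<open>Induced planar forests\<close>

lemma restr_aux_Suc: "restr_aux (Suc k) G S = restr_aux k G (unshift_vertices S)"
  by (induction G arbitrary: k) (auto simp: unshift_vertices_def)

lemma restr_Nil: "restr [] S = []"
  by (simp add: restr_def)

lemma restr_Cons: "restr (t # G) S = restr_t t {p. 0 # p \<in> S} @ restr G (unshift_vertices S)"
  by (simp add: restr_def restr_aux_Suc)

lemma restr_single: "restr [t] S = restr_t t {p. 0 # p \<in> S}"
  by (simp add: restr_def)

lemma restr_t_empty: "restr_t t {} = []"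
  and restr_empty: "restr F {} = []"
proof -
  have "restr_aux k F {} = []" "restr_t t {} = []" for k F and t :: ptree
    by (induction k F "{}::nat list set" and t "{}::nat list set" rule: restr_aux_restr_t.induct) auto
  then show "restr_t t {} = []" "restr F {} = []" by (simp_all add: restr_def)
qed

lemma restr_aux_insert_Nil: "restr_aux k F (insert [] S) = restr_aux k F S"
  by (induction F arbitrary: k) auto

lemma restr_Node: "restr [Node ts] (insert [0] (Cons 0 ` S)) = [Node (restr ts S)]"
proof -
  have "{p. 0 # p \<in> insert [0] (Cons 0 ` S)} = insert [] S" by auto
  then show ?thesis by (simp add: restr_single restr_def restr_aux_insert_Nil)
qed

lemma restr_vertices: "restr F (vertices F) = F"
proof (induction F rule: forest_induct)
  case (Node ts)
  then show ?case by (simp only: vertices_Node restr_Node)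
next
  case (Cons t G)
  have "{p. 0 # p \<in> vertices (t # G)} = {p. 0 # p \<in> vertices [t]}" by simp
  then have "restr (t # G) (vertices (t # G)) = restr [t] (vertices [t]) @ restr G (vertices G)"
    by (simp only: restr_Cons[of t G] restr_single unshift_vertices_Cons)
  then show ?case using Cons by simp
qed (simp add: restr_Nil)

lemma mult_left_tens: "mult_left x (tens A B :: 'k::field tens) = tens (x @ A) B"
  by (auto simp: mult_left_def tens_def fun_eq_iff) (metis append_take_drop_id)

lemma mult_right_tens: "mult_right y (tens A B :: 'k::field tens) = tens A (B @ y)"
  by (auto simp: mult_right_def tens_def fun_eq_iff) (metis append_take_drop_id)

lemma id_Bplus_tens: "id_Bplus (tens A B :: 'k::field tens) = tens A [Node B]"
  by (auto simp: id_Bplus_def tens_def fun_eq_iff split: list.splits ptree.splits)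

lemma mult_left_sum: "mult_left x (\<Sum>a\<in>S. f a :: 'k::field tens) = (\<Sum>a\<in>S. mult_left x (f a))"
  using sum_comp_morphism[of "mult_left x" f S] by (auto simp: mult_left_def fun_eq_iff)

lemma mult_right_sum: "mult_right y (\<Sum>a\<in>S. f a :: 'k::field tens) = (\<Sum>a\<in>S. mult_right y (f a))"
  using sum_comp_morphism[of "mult_right y" f S] by (auto simp: mult_right_def fun_eq_iff)

lemma id_Bplus_sum: "id_Bplus (\<Sum>a\<in>S. f a :: 'k::field tens) = (\<Sum>a\<in>S. id_Bplus (f a))"
  using sum_comp_morphism[of id_Bplus f S]
  by (auto simp: id_Bplus_def fun_eq_iff split: list.splits ptree.splits)

definition cut_tensor :: "forest \<Rightarrow> nat list set \<Rightarrow> 'k::field tens" where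
  "cut_tensor F I = tens (restr F I) (restr F (vertices F - I))"

lemma cut_tensor_empty: "cut_tensor F {} = tens [] F"
  by (simp add: cut_tensor_def restr_empty restr_vertices)

lemma cut_tensor_vertices: "cut_tensor F (vertices F) = tens F []"
  by (simp add: cut_tensor_def restr_empty restr_vertices)

lemma cut_tensor_Cons_shift:
  assumes "J \<subseteq> vertices G"
  shows "cut_tensor (t # G) (vertices [t] \<union> shift_vertices J) = mult_left [t] (cut_tensor G J)"
proof -
  let ?I = "vertices [t] \<union> shift_vertices J"
  have "[] \<notin> J" using assms by auto
  then have "unshift_vertices ?I = J"
    and "unshift_vertices (vertices (t # G) - ?I) = vertices G - J"
    by (simp_all add: unshift_vertices_single_Un_shift unshift_vertices_Diff unshift_vertices_Cons[of t G])
  moreover have "{p. 0 # p \<in> ?I} = {p. 0 # p \<in> vertices [t]}"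
    and "{p. 0 # p \<in> vertices (t # G) - ?I} = {}"
    by auto
  ultimately have "restr (t # G) ?I = restr [t] (vertices [t]) @ restr G J"
    and "restr (t # G) (vertices (t # G) - ?I) = restr_t t {} @ restr G (vertices G - J)"
    by (simp_all only: restr_Cons[of t G] restr_single)
  then show ?thesis by (simp add: cut_tensor_def restr_t_empty restr_vertices mult_left_tens)
qed

lemma cut_tensor_Cons_first:
  assumes "I \<subseteq> vertices [t]"
  shows "cut_tensor (t # G) I = mult_right G (cut_tensor [t] I)"
proof -
  have "unshift_vertices I = {}"
    using assms unshift_vertices_single[of t] by (auto simp: unshift_vertices_def)
  then have "unshift_vertices (vertices (t # G) - I) = vertices G"
    by (simp add: unshift_vertices_Diff unshift_vertices_Cons)
  moreover have "{p. 0 # p \<in> vertices (t # G) - I} = {p. 0 # p \<in> vertices [t] - I}"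
    by auto
  ultimately show ?thesis using \<open>unshift_vertices I = {}\<close>
    by (simp add: cut_tensor_def restr_Cons[of t G] restr_single restr_empty restr_vertices
        mult_right_tens)
qed

lemma cut_tensor_Node:
  assumes "J \<subseteq> vertices ts"
  shows "cut_tensor [Node ts] (Cons 0 ` J) = id_Bplus (cut_tensor ts J)"
proof -
  have "[] \<notin> J" using assms by auto
  moreover have "{p. 0 # p \<in> Cons 0 ` J} = J" by auto
  ultimately have "restr [Node ts] (Cons 0 ` J) = restr ts J"
    by (simp add: restr_single restr_def)
  moreover have "vertices [Node ts] - Cons 0 ` J = insert [0] (Cons 0 ` (vertices ts - J))"
    using assms by (auto simp: vertices_Node)
  ultimately show ?thesis by (simp add: cut_tensor_def restr_Node id_Bplus_tens)
qed

section \<open>Biideals\<close>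

lemma high_ge_Cons [simp]: "high_ge (i # p) (j # q) \<longleftrightarrow> i = j \<and> high_ge p q"
  by (auto simp: high_ge_def)

lemma left_ge_Cons [simp]: "left_ge (i # p) (j # q) \<longleftrightarrow> i < j \<or> i = j \<and> left_ge p q"
  by (auto simp: left_ge_def)

lemma biidealI:
  assumes "I \<subseteq> vertices F"
    and "\<And>s s'. s \<in> I \<Longrightarrow> s' \<in> vertices F \<Longrightarrow> high_ge s' s \<or> left_ge s' s \<Longrightarrow> s' \<in> I"
  shows "biideal F I"
  using assms unfolding biideal_def by blast

lemma biideal_subset: "biideal F I \<Longrightarrow> I \<subseteq> vertices F"
  by (simp add: biideal_def)

lemma biideal_closed:
  "biideal F I \<Longrightarrow> s \<in> I \<Longrightarrow> s' \<in> vertices F \<Longrightarrow> high_ge s' s \<or> left_ge s' s \<Longrightarrow> s' \<in> I"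
  unfolding biideal_def by blast

lemma biideal_empty: "biideal F {}"
  and biideal_vertices: "biideal F (vertices F)"
  unfolding biideal_def by blast+

lemma biideal_unshift:
  assumes "biideal (t # G) I"
  shows "biideal G (unshift_vertices I)"
proof (rule biidealI)
  show "unshift_vertices I \<subseteq> vertices G"
    using biideal_subset[OF assms] by (auto simp: unshift_vertices_def)
next
  fix s s' assume s: "s \<in> unshift_vertices I" and s': "s' \<in> vertices G"
    and ge: "high_ge s' s \<or> left_ge s' s"
  obtain i p where i: "s = i # p" using s by (cases s) auto
  obtain j q where j: "s' = j # q" using s' by (cases s') auto
  have "Suc j # q \<in> I"
    using biideal_closed[OF assms, of "Suc i # p" "Suc j # q"] s s' ge i j by simp
  then show "s' \<in> unshift_vertices I" using j by simp
qed

lemma biideal_Cons_shift: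
  assumes "biideal G J"
  shows "biideal (t # G) (vertices [t] \<union> shift_vertices J)"
proof (rule biidealI)
  show "vertices [t] \<union> shift_vertices J \<subseteq> vertices (t # G)"
    using biideal_subset[OF assms] vertices_Cons[of t G] shift_vertices_mono by blast
next
  fix s s' assume s: "s \<in> vertices [t] \<union> shift_vertices J" and s': "s' \<in> vertices (t # G)"
    and ge: "high_ge s' s \<or> left_ge s' s"
  show "s' \<in> vertices [t] \<union> shift_vertices J"
  proof (cases "s' \<in> vertices [t]")
    case False
    then obtain j q where j: "s' = Suc j # q" "j # q \<in> vertices G"
      using s' unfolding vertices_Cons[of t G] by (cases s') auto
    obtain i p where i: "s = Suc i # p" "i # p \<in> J"
      using s ge j by (cases s) auto
    have "j # q \<in> J"
      using biideal_closed[OF assms i(2) j(2)] ge i j by simp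
    then show ?thesis using j by simp
  qed simp
qed

lemma biideal_Cons_of_single:
  assumes "biideal [t] I"
  shows "biideal (t # G) I"
proof (rule biidealI)
  show "I \<subseteq> vertices (t # G)" using biideal_subset[OF assms] vertices_single_subset by blast
next
  fix s s' assume s: "s \<in> I" and s': "s' \<in> vertices (t # G)"
    and ge: "high_ge s' s \<or> left_ge s' s"
  obtain p where p: "s = 0 # p" using s biideal_subset[OF assms] by (cases s) auto
  obtain q where q: "s' = 0 # q" using s' ge p by (cases s') auto
  have "s' \<in> vertices [t]" using s' q by simp
  then show "s' \<in> I" using biideal_closed[OF assms s _ ge] by blast
qed

lemma biideal_single_of_Cons: "biideal (t # G) I \<Longrightarrow> I \<subseteq> vertices [t] \<Longrightarrow> biideal [t] I"
  using vertices_single_subset unfolding biideal_def by blast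

lemma vertices_single_subset_biideal:
  assumes "biideal (t # G) I" and "\<not> I \<subseteq> vertices [t]"
  shows "vertices [t] \<subseteq> I"
proof
  obtain x where x: "x \<in> I" "x \<notin> vertices [t]" using assms(2) by blast
  moreover have "x \<in> vertices (t # G)" using x biideal_subset[OF assms(1)] by blast
  ultimately obtain i p where i: "x = Suc i # p" by (auto elim: vertices_ConsE)
  fix y assume y: "y \<in> vertices [t]"
  then obtain q where "y = 0 # q" by (cases y) auto
  then have "left_ge y x" using i by simp
  then show "y \<in> I" using biideal_closed[OF assms(1) x(1)] y vertices_single_subset by blast
qed

lemma split_vertices_Cons:
  assumes "I \<subseteq> vertices (t # G)"
  shows "I = (I \<inter> vertices [t]) \<union> shift_vertices (unshift_vertices I)"
proof (intro set_eqI iffI)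
  fix x assume x: "x \<in> I"
  then have "x \<in> vertices (t # G)" using assms by blast
  then show "x \<in> (I \<inter> vertices [t]) \<union> shift_vertices (unshift_vertices I)"
    using x by (cases rule: vertices_ConsE) auto
qed (auto simp: shift_vertices_def)

lemma biideals_Cons:
  "{I. biideal (t # G) I} =
     (\<lambda>J. vertices [t] \<union> shift_vertices J) ` {J. biideal G J} \<union> {I. biideal [t] I}"
proof (intro equalityI subsetI)
  fix I assume "I \<in> {I. biideal (t # G) I}"
  then have I: "biideal (t # G) I" by simp
  show "I \<in> (\<lambda>J. vertices [t] \<union> shift_vertices J) ` {J. biideal G J} \<union> {I. biideal [t] I}"
  proof (cases "I \<subseteq> vertices [t]")
    case True
    then show ?thesis using biideal_single_of_Cons[OF I] by simp
  next
    case False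
    then have "I = vertices [t] \<union> shift_vertices (unshift_vertices I)"
      using split_vertices_Cons[OF biideal_subset[OF I]] vertices_single_subset_biideal[OF I]
      by blast
    then show ?thesis using biideal_unshift[OF I] by blast
  qed
qed (auto intro: biideal_Cons_shift biideal_Cons_of_single)

lemma biideals_Cons_Int:
  "(\<lambda>J. vertices [t] \<union> shift_vertices J) ` {J. biideal G J} \<inter> {I. biideal [t] I} = {vertices [t]}"
proof (intro equalityI subsetI)
  fix I assume "I \<in> (\<lambda>J. vertices [t] \<union> shift_vertices J) ` {J. biideal G J} \<inter> {I. biideal [t] I}"
  then obtain J where I: "I = vertices [t] \<union> shift_vertices J" and "I \<subseteq> vertices [t]"
    using biideal_subset by blast
  then have "shift_vertices J = {}"
    using shift_vertices_Int_single[of J t] by blast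
  then show "I \<in> {vertices [t]}" using I by simp
next
  fix I assume "I \<in> {vertices [t]}"
  moreover have "vertices [t] = vertices [t] \<union> shift_vertices {}" by (simp add: shift_vertices_def)
  ultimately show "I \<in> (\<lambda>J. vertices [t] \<union> shift_vertices J) ` {J. biideal G J} \<inter> {I. biideal [t] I}"
    using biideal_empty biideal_vertices by blast
qed

lemma biideal_Node:
  assumes "biideal ts J"
  shows "biideal [Node ts] (Cons 0 ` J)"
proof (rule biidealI)
  show "Cons 0 ` J \<subseteq> vertices [Node ts]"
    using biideal_subset[OF assms] by (auto simp: vertices_Node)
next
  fix s s' assume s: "s \<in> Cons 0 ` J" and s': "s' \<in> vertices [Node ts]"
    and ge: "high_ge s' s \<or> left_ge s' s"
  obtain p where p: "s = 0 # p" "p \<in> J" using s by blast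
  then have "p \<noteq> []" using biideal_subset[OF assms] by auto
  then obtain q where q: "s' = 0 # q" "q \<in> vertices ts"
    using s' ge p by (auto simp: vertices_Node high_ge_def left_ge_def)
  then show "s' \<in> Cons 0 ` J" using biideal_closed[OF assms p(2) q(2)] ge p by simp
qed

lemma biideal_below_root:
  assumes "biideal [Node ts] I" and "[0] \<notin> I"
  shows "biideal ts {p. 0 # p \<in> I}"
proof (rule biidealI)
  show "{p. 0 # p \<in> I} \<subseteq> vertices ts"
    using biideal_subset[OF assms(1)] assms(2) by (auto simp: vertices_Node)
next
  fix s s' assume "s \<in> {p. 0 # p \<in> I}" "s' \<in> vertices ts" "high_ge s' s \<or> left_ge s' s"
  then show "s' \<in> {p. 0 # p \<in> I}"
    using biideal_closed[OF assms(1), of "0 # s" "0 # s'"] by (simp add: vertices_Node)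
qed

lemma biideals_Node:
  "{I. biideal [Node ts] I} = insert (vertices [Node ts]) (image (Cons 0) ` {J. biideal ts J})"
proof (intro equalityI subsetI)
  fix I assume "I \<in> {I. biideal [Node ts] I}"
  then have I: "biideal [Node ts] I" by simp
  show "I \<in> insert (vertices [Node ts]) (image (Cons 0) ` {J. biideal ts J})"
  proof (cases "[0] \<in> I")
    case True
    have "high_ge s [0]" if "s \<in> vertices [Node ts]" for s
      using that by (auto simp: vertices_Node high_ge_def)
    then have "I = vertices [Node ts]"
      using biideal_closed[OF I True] biideal_subset[OF I] by blast
    then show ?thesis by simp
  next
    case False
    then have "I = Cons 0 ` {p. 0 # p \<in> I}"
      using biideal_subset[OF I] by (auto simp: vertices_Node)
    then show ?thesis using biideal_below_root[OF I False] by blast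
  qed
qed (auto intro: biideal_Node biideal_vertices)

lemma finite_biideals: "finite {I. biideal F I}"
  by (rule finite_subset[of _ "Pow (vertices F)"]) (auto simp: biideal_def finite_vertices)

definition biideal_coproduct :: "forest \<Rightarrow> 'k::field tens" where
  "biideal_coproduct F = (\<Sum>I \<in> {I. biideal F I}. cut_tensor F I)"

lemma biideal_coproduct_Nil: "biideal_coproduct [] = tens [] []"
proof -
  have "{I. biideal [] I} = {{}}"
    by (auto simp: biideal_def vertices_Nil)
  then show ?thesis by (simp add: biideal_coproduct_def cut_tensor_empty)
qed

lemma biideal_coproduct_Node:
  "biideal_coproduct [Node ts] = tens [Node ts] [] + id_Bplus (biideal_coproduct ts)"
proof -
  have "vertices [Node ts] \<noteq> Cons 0 ` J" if "biideal ts J" for J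
  proof
    assume "vertices [Node ts] = Cons 0 ` J"
    then have "[] \<in> J" using vertices_Node[of ts] by (metis image_iff insertI1 list.inject)
    then show False using biideal_subset[OF that] by auto
  qed
  then have "vertices [Node ts] \<notin> image (Cons 0) ` {J. biideal ts J}" by blast
  moreover have "inj_on (image (Cons 0)) {J. biideal ts J}"
    by (simp add: inj_on_def inj_image_eq_iff)
  ultimately have "biideal_coproduct [Node ts] = cut_tensor [Node ts] (vertices [Node ts])
      + (\<Sum>J \<in> {J. biideal ts J}. cut_tensor [Node ts] (Cons 0 ` J))"
    unfolding biideal_coproduct_def biideals_Node using finite_biideals
    by (simp add: sum.reindex)
  also have "\<dots> = tens [Node ts] [] + (\<Sum>J \<in> {J. biideal ts J}. id_Bplus (cut_tensor ts J))"
    using biideal_subset by (simp add: cut_tensor_vertices cut_tensor_Node)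
  finally show ?thesis by (simp add: biideal_coproduct_def id_Bplus_sum)
qed

lemma biideal_coproduct_Cons:
  "biideal_coproduct (t # G) =
     mult_left [t] (biideal_coproduct G) + mult_right G (biideal_coproduct [t]) - tens [t] G"
proof -
  let ?shift = "\<lambda>J. vertices [t] \<union> shift_vertices J"
  let ?A = "?shift ` {J. biideal G J}" and ?B = "{I. biideal [t] I}"
  have "inj_on ?shift {J. biideal G J}"
  proof (rule inj_onI)
    fix J J' assume "J \<in> {J. biideal G J}" "J' \<in> {J. biideal G J}" and eq: "?shift J = ?shift J'"
    then have "[] \<notin> J" "[] \<notin> J'" using biideal_subset Nil_notin_vertices by blast+
    then show "J = J'"
      using arg_cong[OF eq, of unshift_vertices] by (simp add: unshift_vertices_single_Un_shift)
  qed
  then have "(\<Sum>I\<in>?A. cut_tensor (t # G) I) = (\<Sum>J | biideal G J. cut_tensor (t # G) (?shift J))"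
    by (simp add: sum.reindex)
  also have "\<dots> = (\<Sum>J | biideal G J. mult_left [t] (cut_tensor G J))"
    by (intro sum.cong refl cut_tensor_Cons_shift biideal_subset) simp
  also have "\<dots> = mult_left [t] (biideal_coproduct G)"
    by (simp add: biideal_coproduct_def mult_left_sum)
  finally have A: "(\<Sum>I\<in>?A. cut_tensor (t # G) I) = mult_left [t] (biideal_coproduct G)" .
  have "(\<Sum>I\<in>?B. cut_tensor (t # G) I) = (\<Sum>I\<in>?B. mult_right G (cut_tensor [t] I))"
    by (intro sum.cong refl cut_tensor_Cons_first biideal_subset) simp
  then have B: "(\<Sum>I\<in>?B. cut_tensor (t # G) I) = mult_right G (biideal_coproduct [t])"
    by (simp add: biideal_coproduct_def mult_right_sum)
  have "cut_tensor (t # G) (vertices [t]) = tens [t] G"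
    using cut_tensor_Cons_shift[of "{}" G t]
    by (simp add: shift_vertices_def cut_tensor_empty mult_left_tens)
  then have AB: "(\<Sum>I\<in>?A \<inter> ?B. cut_tensor (t # G) I) = tens [t] G"
    by (simp add: biideals_Cons_Int)
  have "(\<Sum>I\<in>?A \<union> ?B. cut_tensor (t # G) I) + (\<Sum>I\<in>?A \<inter> ?B. cut_tensor (t # G) I)
      = (\<Sum>I\<in>?A. cut_tensor (t # G) I) + (\<Sum>I\<in>?B. cut_tensor (t # G) I)"
    by (intro sum.union_inter finite_imageI finite_biideals)
  then show ?thesis
    unfolding biideal_coproduct_def[of "t # G"] biideals_Cons[of t G] A B AB
    by (simp add: eq_diff_eq)
qed

theorem proposition12:
  fixes D :: "forest \<Rightarrow> 'k::field tens" and F :: forest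
  assumes "is_Delta D"
  shows "D F = (\<Sum>I \<in> {I. biideal F I}. tens (restr F I) (restr F (vertices F - I)))"
proof -
  have unit: "D [] = tens [] []"
    and mult: "\<And>x y. D (x @ y) = mult_left x (D y) + mult_right y (D x) - tens x y"
    and graft: "\<And>x. D [Node x] = tens [Node x] [] + id_Bplus (D x)"
    using assms unfolding is_Delta_def Bplus_def by simp_all
  have "D F = biideal_coproduct F"
  proof (induction F rule: forest_induct)
    case Nil
    show ?case by (simp add: unit biideal_coproduct_Nil)
  next
    case (Node ts)
    then show ?case by (simp add: graft biideal_coproduct_Node)
  next
    case (Cons t G)
    have "D (t # G) = mult_left [t] (D G) + mult_right G (D [t]) - tens [t] G"
      using mult[of "[t]" G] by simp
    then show ?case using Cons by (simp add: biideal_coproduct_Cons[of t G])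
  qed
  then show ?thesis by (simp add: biideal_coproduct_def cut_tensor_def)
qed

end
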